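(* Assume the subgraph $\mathcal G_{\sigma(t)}$ is undirected for all $t\ge0$. Then for all $t\ge0$, every nonzero eigenvalue of $\mathcal H_{\sigma(t)}\in\mathbb{R}^{N\times N}$ is not less than $\lambda_H=\frac{4}{N(N^2-N+4)}$.
   Context: $\sigma:[0,\infty)\to\mathcal P=\{1,\dots,n_0\}$ is a piecewise constant switching signal. For each $p\in\mathcal P$, $\bar{\mathcal G}_p$ is a graph on nodes $\{0,1,\dots,N\}$ with edge set $\bar{\mathcal E}_p$ of ordered pairs $(j,i)$, $j\ne i$; $a_{ij}(t)=1$ if $(j,i)\in\bar{\mathcal E}_{\sigma(t)}$, else $0$. $\mathcal G_{\sigma(t)}$ is the subgraph on $\{1,\dots,N\}$ with the edges of $\bar{\mathcal E}_{\sigma(t)}$ among those nodes (undirected: $(i,j)$ edge iff $(j,i)$ edge), with Laplacian $\mathcal L_{\sigma(t)}$ ($l_{ii}=\sum_{j=1}^Na_{ij}(t)$, $l_{ij}=-a_{ij}(t)$, $i\ne j$). $\Delta_{\sigma(t)}=\mathrm{diag}(a_{10}(t),\dots,a_{N0}(t))$ and $\mathcal H_{\sigma(t)}=\mathcal L_{\sigma(t)}+\Delta_{\sigma(t)}$ (the leader-follower matrix). *)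

theory Defs
  imports "HOL-Analysis.Analysis" "Jordan_Normal_Form.Char_Poly"
begin

definition piecewise_constant :: "(real \<Rightarrow> nat) \<Rightarrow> bool" where
  "piecewise_constant \<sigma> \<longleftrightarrow>
     (\<exists>ts :: nat \<Rightarrow> real. ts 0 = 0 \<and> strict_mono ts \<and> filterlim ts at_top sequentially \<and>
        (\<forall>k. \<forall>t. ts k \<le> t \<and> t < ts (Suc k) \<longrightarrow> \<sigma> t = \<sigma> (ts k)))"

definition adj :: "(nat \<times> nat) set \<Rightarrow> nat \<Rightarrow> nat \<Rightarrow> real" where
  "adj E i j = (if (j, i) \<in> E then 1 else 0)"

text \<open>Leader-follower matrix H = L + Delta of the graph with edge set E on nodes {0..N};
  row/column index k < N of the matrix corresponds to follower node k+1.\<close>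
definition laplacian_mat :: "nat \<Rightarrow> (nat \<times> nat) set \<Rightarrow> real mat" where
  "laplacian_mat N E = mat N N (\<lambda>(i, j).
      if i = j then (\<Sum>l = 1..N. adj E (i+1) l) else - adj E (i+1) (j+1))"

definition leader_diag :: "nat \<Rightarrow> (nat \<times> nat) set \<Rightarrow> real mat" where
  "leader_diag N E = mat N N (\<lambda>(i, j). if i = j then adj E (i+1) 0 else 0)"

definition H_mat :: "nat \<Rightarrow> (nat \<times> nat) set \<Rightarrow> real mat" where
  "H_mat N E = laplacian_mat N E + leader_diag N E"

end

(*
  Let v be an eigenvector of H for mu ~= 0. The Laplacian does not couple different connected
  components of the follower graph, so the restriction w of v to the component of a coordinate
  i0 of maximal modulus is again an eigenvector, and
    mu * sum_i w_i^2 = 1/2 sum_ij a_ij (w_i - w_j)^2 + sum_i d_i w_i^2 =: Q.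
  If the component contains a neighbour k of the leader, Cauchy-Schwarz along a simple path from
  i0 to k bounds w^2 at the node s steps before k by (s + 1) Q; summing along the path and bounding
  the other coordinates by w_i0^2 gives sum_i w_i^2 <= N (N + 1) / 2 * Q. Otherwise mu ~= 0 forces
  sum_i w_i = 0, so some w_k has the sign opposite to w_i0, and Cauchy-Schwarz along a path from i0
  to k gives sum_i w_i^2 <= N w_i0^2 <= N (N - 1) Q. Both constants are at most
  N (N^2 - N + 4) / 4 = 1 / lambda_H.
*)

theory Submission
  imports Defs "HOL-Library.Transitive_Closure_Table"
begin

lemma square_diff_le_path_energy:
  fixes x :: "nat \<Rightarrow> real"
  assumes "s \<le> l"
  shows "(x s - x l)\<^sup>2 \<le> real (l - s) * (\<Sum>t<l. (x t - x (Suc t))\<^sup>2)"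
proof -
  have "x s - x l = (\<Sum>t = s..<l. x t - x (Suc t))"
    using sum_Suc_diff'[OF assms, of "\<lambda>t. - x t"] by simp
  then have "(x s - x l)\<^sup>2 \<le> (\<Sum>t = s..<l. (x t - x (Suc t))\<^sup>2) * real (l - s)"
    using sum_squared_le_sum_of_squares[of "\<lambda>t. x t - x (Suc t)" "{s..<l}"] by simp
  also have "\<dots> \<le> (\<Sum>t<l. (x t - x (Suc t))\<^sup>2) * real (l - s)"
    by (intro mult_right_mono sum_mono2) auto
  finally show ?thesis
    by (simp add: mult.commute)
qed

lemma square_le_path_energy:
  fixes x :: "nat \<Rightarrow> real"
  assumes "s \<le> l"
  shows "(x s)\<^sup>2 \<le> real (l - s + 1) * ((\<Sum>t<l. (x t - x (Suc t))\<^sup>2) + (x l)\<^sup>2)"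
proof -
  \<comment> \<open>appending a zero turns the end value x l into one more increment\<close>
  define y where "y t = (if t \<le> l then x t else 0)" for t
  have "(\<Sum>t<Suc l. (y t - y (Suc t))\<^sup>2) = (\<Sum>t<l. (x t - x (Suc t))\<^sup>2) + (x l)\<^sup>2"
    by (simp add: y_def)
  moreover have "(y s - y (Suc l))\<^sup>2 = (x s)\<^sup>2"
    using assms by (simp add: y_def)
  ultimately show ?thesis
    using square_diff_le_path_energy[of s "Suc l" y] assms by (simp add: Suc_diff_le)
qed

lemma gauss_sum_reversed: "(\<Sum>s\<le>l. real (l - s + 1)) = real (l + 1) * real (l + 2) / 2"
proof (induction l)
  case (Suc l)
  have "(\<Sum>s\<le>Suc l. real (Suc l - s + 1)) = (\<Sum>s\<le>l. real (l - s + 1) + 1) + 1"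
    by (simp add: Suc_diff_le)
  also have "\<dots> = real (l + 1) * real (l + 2) / 2 + real (l + 1) + 1"
    using Suc by (simp add: sum.distrib)
  finally show ?case
    by (simp add: field_simps)
qed simp

lemma triangular_add_rectangle_le:
  assumes "l < N"
  shows "real (l + 1) * real (l + 2) / 2 + real (N - (l + 1)) * real (l + 1)
    \<le> real N * (real N + 1) / 2"
proof -
  define m where "m = real (N - (l + 1))"
  have "real N = m + real (l + 1)"
    using assms by (simp add: m_def)
  moreover have "m \<ge> 0"
    by (simp add: m_def)
  ultimately show ?thesis
    unfolding m_def[symmetric] by (simp add: algebra_simps)
qed

lemma sum_zero_imp_opposite_sign:
  fixes f :: "'a \<Rightarrow> real"
  assumes "finite A" "sum f A = 0" "i \<in> A" "f i \<noteq> 0"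
  obtains k where "k \<in> A" "f i * f k < 0"
proof (rule ccontr)
  assume "\<not> thesis"
  with that have "\<forall>k\<in>A. f i * f k \<ge> 0"
    by (meson not_le)
  moreover have "f i * f i > 0"
    using assms(4) not_real_square_gt_zero by blast
  ultimately have "(\<Sum>k\<in>A. f i * f k) > 0"
    using assms(1,3) by (intro sum_pos2) auto
  then show False
    using assms(2) by (simp flip: sum_distrib_left)
qed

definition graph_edge :: "nat \<Rightarrow> (nat \<Rightarrow> nat \<Rightarrow> real) \<Rightarrow> nat \<Rightarrow> nat \<Rightarrow> bool" where
  "graph_edge N a i j \<longleftrightarrow> i < N \<and> j < N \<and> a i j = 1"

definition simple_path :: "nat \<Rightarrow> (nat \<Rightarrow> nat \<Rightarrow> real) \<Rightarrow> (nat \<Rightarrow> nat) \<Rightarrow> nat \<Rightarrow> bool" where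
  "simple_path N a p l \<longleftrightarrow>
     (\<forall>s\<le>l. p s < N) \<and> inj_on p {..l} \<and> (\<forall>s<l. a (p s) (p (Suc s)) = 1)"

lemma simple_path_length_less:
  assumes "simple_path N a p l"
  shows "l < N"
proof -
  have "card (p ` {..l}) = l + 1"
    using assms card_image[of p "{..l}"] by (simp add: simple_path_def)
  moreover have "card (p ` {..l}) \<le> card {..<N}"
    using assms by (intro card_mono) (auto simp: simple_path_def)
  ultimately show ?thesis
    by simp
qed

lemma rtranclp_imp_simple_path:
  assumes "(graph_edge N a)\<^sup>*\<^sup>* x y" "x < N"
  obtains p l where "simple_path N a p l" "p 0 = x" "p l = y"
proof -
  obtain xs0 where "rtrancl_path (graph_edge N a) x xs0 y"
    using assms(1) by (auto simp: rtranclp_eq_rtrancl_path)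
  then obtain xs where xs: "rtrancl_path (graph_edge N a) x xs y" "distinct (x # xs)"
    by (rule rtrancl_path_distinct)
  define p where "p s = (x # xs) ! s" for s
  have step: "graph_edge N a (p s) (p (Suc s))" if "s < length xs" for s
    using rtrancl_path_nth[OF xs(1) that] by (simp add: p_def)
  have "p s < N" if "s \<le> length xs" for s
    using that assms(2) step[of "s - 1"] by (cases s) (auto simp: p_def graph_edge_def)
  moreover have "inj_on p {..length xs}"
    using xs(2) by (auto simp: inj_on_def p_def nth_eq_iff_index_eq simp del: distinct.simps)
  ultimately have "simple_path N a p (length xs)"
    using step by (simp add: simple_path_def graph_edge_def)
  moreover have "p 0 = x"
    by (simp add: p_def)
  moreover have "p (length xs) = y"
    using xs(1) rtrancl_path_last[OF xs(1)]
    by (cases xs) (auto simp: p_def last_conv_nth elim: rtrancl_path.cases)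
  ultimately show ?thesis
    using that by blast
qed

definition laplacian_energy :: "nat \<Rightarrow> (nat \<Rightarrow> nat \<Rightarrow> real) \<Rightarrow> (nat \<Rightarrow> real) \<Rightarrow> real" where
  "laplacian_energy N a w = (\<Sum>i<N. \<Sum>j<N. a i j * (w i - w j)\<^sup>2) / 2"

lemma laplacian_quadratic_form:
  fixes w :: "nat \<Rightarrow> real"
  assumes sym: "\<forall>i<N. \<forall>j<N. a i j = a j i"
  shows "(\<Sum>i<N. w i * (\<Sum>j<N. a i j * (w i - w j))) = laplacian_energy N a w"
proof -
  define X where "X = (\<Sum>i<N. \<Sum>j<N. a i j * w i * (w i - w j))"
  have "X = (\<Sum>j<N. \<Sum>i<N. a i j * w i * (w i - w j))"
    unfolding X_def by (rule sum.swap)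
  also have "\<dots> = (\<Sum>i<N. \<Sum>j<N. a i j * w j * (w j - w i))"
    using sym by (auto intro!: sum.cong)
  finally have "X + X = (\<Sum>i<N. \<Sum>j<N. a i j * w i * (w i - w j) + a i j * w j * (w j - w i))"
    unfolding X_def by (simp add: sum.distrib)
  also have "\<dots> = (\<Sum>i<N. \<Sum>j<N. a i j * (w i - w j)\<^sup>2)"
    by (auto intro!: sum.cong simp: power2_eq_square algebra_simps)
  finally show ?thesis
    unfolding laplacian_energy_def X_def by (simp add: sum_distrib_left algebra_simps)
qed

lemma laplacian_sum_eq_0:
  fixes w :: "nat \<Rightarrow> real"
  assumes sym: "\<forall>i<N. \<forall>j<N. a i j = a j i"
  shows "(\<Sum>i<N. \<Sum>j<N. a i j * (w i - w j)) = 0"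
proof -
  have "(\<Sum>i<N. \<Sum>j<N. a i j * w j) = (\<Sum>j<N. \<Sum>i<N. a i j * w j)"
    by (rule sum.swap)
  also have "\<dots> = (\<Sum>i<N. \<Sum>j<N. a i j * w i)"
    using sym by (auto intro!: sum.cong)
  finally show ?thesis
    by (simp add: right_diff_distrib sum_subtractf)
qed

lemma path_energy_le_laplacian_energy:
  fixes w :: "nat \<Rightarrow> real"
  assumes sym: "\<forall>i<N. \<forall>j<N. a i j = a j i" and nonneg: "\<forall>i j. a i j \<ge> 0"
    and path: "simple_path N a p l"
  shows "(\<Sum>t<l. (w (p t) - w (p (Suc t)))\<^sup>2) \<le> laplacian_energy N a w"
proof -
  define f where "f = (\<lambda>(i, j). a i j * (w i - w j)\<^sup>2)"
  define fwd where "fwd = (\<lambda>t. (p t, p (Suc t)))"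
  define bwd where "bwd = (\<lambda>t. (p (Suc t), p t))"
  have pN: "\<forall>s\<le>l. p s < N" and inj: "inj_on p {..l}"
    and edge: "\<forall>s<l. a (p s) (p (Suc s)) = 1"
    using path by (auto simp: simple_path_def)
  have inj_fwd: "inj_on fwd {..<l}" and inj_bwd: "inj_on bwd {..<l}"
    using inj by (auto simp: inj_on_def fwd_def bwd_def)
  \<comment> \<open>each path edge occurs in the double sum in both orientations, absorbing the factor 1/2\<close>
  have disjoint: "fwd ` {..<l} \<inter> bwd ` {..<l} = {}"
  proof -
    have False if "s < l" "t < l" "p s = p (Suc t)" "p (Suc s) = p t" for s t
    proof -
      have "s = Suc t" "Suc s = t"
        using inj_onD[OF inj that(3)] inj_onD[OF inj that(4)] that(1,2) by auto
      then show False
        by simp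
    qed
    then show ?thesis
      by (auto simp: fwd_def bwd_def)
  qed
  have "sum f (fwd ` {..<l}) = (\<Sum>t<l. (w (p t) - w (p (Suc t)))\<^sup>2)"
    unfolding sum.reindex[OF inj_fwd] using edge by (simp add: f_def fwd_def)
  moreover have "sum f (bwd ` {..<l}) = (\<Sum>t<l. (w (p t) - w (p (Suc t)))\<^sup>2)"
    unfolding sum.reindex[OF inj_bwd] using edge sym pN
    by (auto simp: f_def bwd_def power2_commute intro!: sum.cong)
  moreover have "sum f (fwd ` {..<l} \<union> bwd ` {..<l}) \<le> sum f ({..<N} \<times> {..<N})"
    using pN nonneg by (intro sum_mono2) (auto simp: f_def fwd_def bwd_def)
  ultimately show ?thesis
    by (simp add: sum.union_disjoint[OF _ _ disjoint] sum.cartesian_product f_def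
        laplacian_energy_def)
qed

text \<open>The componentwise form of H v = mu v: follower node k + 1 has index k, a is the adjacency
  among followers and d marks the followers adjacent to the leader.\<close>
definition leader_follower_eigen ::
    "nat \<Rightarrow> (nat \<Rightarrow> nat \<Rightarrow> real) \<Rightarrow> (nat \<Rightarrow> real) \<Rightarrow> real \<Rightarrow> (nat \<Rightarrow> real) \<Rightarrow> bool" where
  "leader_follower_eigen N a d \<mu> v \<longleftrightarrow>
     (\<forall>i<N. \<mu> * v i = (\<Sum>j<N. a i j * (v i - v j)) + d i * v i)"

lemma leader_follower_eigen_restrict:
  assumes eig: "leader_follower_eigen N a d \<mu> v"
    and closed: "\<forall>i<N. \<forall>j<N. a i j \<noteq> 0 \<longrightarrow> (i \<in> C \<longleftrightarrow> j \<in> C)"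
  shows "leader_follower_eigen N a d \<mu> (\<lambda>j. if j \<in> C then v j else 0)"
  unfolding leader_follower_eigen_def
proof (intro allI impI)
  fix i assume "i < N"
  show "\<mu> * (if i \<in> C then v i else 0) =
      (\<Sum>j<N. a i j * ((if i \<in> C then v i else 0) - (if j \<in> C then v j else 0)))
      + d i * (if i \<in> C then v i else 0)"
  proof (cases "i \<in> C")
    case True
    then show ?thesis
      using eig closed \<open>i < N\<close> by (force simp: leader_follower_eigen_def intro!: sum.cong)
  next
    case False
    then show ?thesis
      using closed \<open>i < N\<close> by (force intro!: sum.neutral)
  qed
qed

lemma leader_follower_eigen_energy:
  fixes w :: "nat \<Rightarrow> real"
  assumes sym: "\<forall>i<N. \<forall>j<N. a i j = a j i" and eig: "leader_follower_eigen N a d \<mu> w"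
  shows "\<mu> * (\<Sum>i<N. (w i)\<^sup>2) = laplacian_energy N a w + (\<Sum>i<N. d i * (w i)\<^sup>2)"
proof -
  have "\<mu> * (\<Sum>i<N. (w i)\<^sup>2) = (\<Sum>i<N. w i * (\<mu> * w i))"
    by (simp add: sum_distrib_left power2_eq_square mult.left_commute)
  also have "\<dots> = (\<Sum>i<N. w i * (\<Sum>j<N. a i j * (w i - w j)) + d i * (w i)\<^sup>2)"
    using eig by (auto simp: leader_follower_eigen_def power2_eq_square algebra_simps
        intro!: sum.cong)
  finally show ?thesis
    by (simp add: sum.distrib laplacian_quadratic_form[OF sym])
qed

lemma leader_follower_eigen_sum_eq_0:
  fixes w :: "nat \<Rightarrow> real"
  assumes sym: "\<forall>i<N. \<forall>j<N. a i j = a j i" and eig: "leader_follower_eigen N a d \<mu> w"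
    and no_leader: "\<forall>i<N. d i * w i = 0" and "\<mu> \<noteq> 0"
  shows "(\<Sum>i<N. w i) = 0"
proof -
  have "\<mu> * (\<Sum>i<N. w i) = (\<Sum>i<N. \<Sum>j<N. a i j * (w i - w j))"
    using eig no_leader by (simp add: leader_follower_eigen_def sum_distrib_left)
  then show ?thesis
    using laplacian_sum_eq_0[OF sym] \<open>\<mu> \<noteq> 0\<close> by simp
qed

lemma leader_follower_eigen_component:
  fixes a :: "nat \<Rightarrow> nat \<Rightarrow> real" and v :: "nat \<Rightarrow> real"
  assumes a01: "\<forall>i j. a i j = 0 \<or> a i j = 1" and sym: "\<forall>i<N. \<forall>j<N. a i j = a j i"
    and eig: "leader_follower_eigen N a d \<mu> v" and nonzero: "\<exists>i<N. v i \<noteq> 0"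
  obtains w i0 where "leader_follower_eigen N a d \<mu> w" "i0 < N" "w i0 \<noteq> 0"
    "\<forall>j<N. (w j)\<^sup>2 \<le> (w i0)\<^sup>2"
    "\<forall>j<N. w j \<noteq> 0 \<longrightarrow> (graph_edge N a)\<^sup>*\<^sup>* i0 j"
proof -
  have "Max ((\<lambda>j. (v j)\<^sup>2) ` {..<N}) \<in> (\<lambda>j. (v j)\<^sup>2) ` {..<N}"
    using nonzero by (intro Max_in) auto
  then obtain i0 where "i0 < N" and i0_max: "(v i0)\<^sup>2 = Max ((\<lambda>j. (v j)\<^sup>2) ` {..<N})"
    by auto
  have vmax: "\<forall>j<N. (v j)\<^sup>2 \<le> (v i0)\<^sup>2"
    unfolding i0_max by simp
  have "v i0 \<noteq> 0"
    using nonzero vmax by (metis power_zero_numeral zero_less_power2 not_le)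
  define C where "C = {j. (graph_edge N a)\<^sup>*\<^sup>* i0 j}"
  have closed: "\<forall>i<N. \<forall>j<N. a i j \<noteq> 0 \<longrightarrow> (i \<in> C \<longleftrightarrow> j \<in> C)"
  proof (intro allI impI)
    fix i j assume "i < N" "j < N" "a i j \<noteq> 0"
    then have "graph_edge N a i j" "graph_edge N a j i"
      using a01 sym by (auto simp: graph_edge_def)
    then show "i \<in> C \<longleftrightarrow> j \<in> C"
      by (auto simp: C_def intro: rtranclp.rtrancl_into_rtrancl)
  qed
  have "i0 \<in> C"
    by (simp add: C_def)
  show ?thesis
  proof (rule that)
    show "leader_follower_eigen N a d \<mu> (\<lambda>j. if j \<in> C then v j else 0)"
      by (rule leader_follower_eigen_restrict[OF eig closed])
  qed (use \<open>i0 < N\<close> \<open>i0 \<in> C\<close> \<open>v i0 \<noteq> 0\<close> vmax in \<open>auto simp: C_def\<close>)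
qed

lemma sum_squares_le_energy_if_leader_reachable:
  fixes w :: "nat \<Rightarrow> real"
  assumes sym: "\<forall>i<N. \<forall>j<N. a i j = a j i" and nonneg_a: "\<forall>i j. a i j \<ge> 0"
    and nonneg_d: "\<forall>i. d i \<ge> 0"
    and reach: "(graph_edge N a)\<^sup>*\<^sup>* i0 k" and "i0 < N" and leader: "d k = 1"
    and max: "\<forall>j<N. (w j)\<^sup>2 \<le> (w i0)\<^sup>2"
  shows "(\<Sum>j<N. (w j)\<^sup>2)
      \<le> real N * (real N + 1) / 2 * (laplacian_energy N a w + (\<Sum>j<N. d j * (w j)\<^sup>2))"
proof -
  obtain p l where path: "simple_path N a p l" and "p 0 = i0" "p l = k"
    using rtranclp_imp_simple_path[OF reach \<open>i0 < N\<close>] by blast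
  define B where "B = (\<Sum>t<l. (w (p t) - w (p (Suc t)))\<^sup>2) + (w k)\<^sup>2"
  define P where "P = p ` {..l}"
  have "l < N"
    using path by (rule simple_path_length_less)
  have pN: "\<forall>s\<le>l. p s < N" and inj: "inj_on p {..l}"
    using path by (auto simp: simple_path_def)
  have "B \<ge> 0"
    unfolding B_def by (auto intro!: add_nonneg_nonneg sum_nonneg)
  have "k < N"
    using pN \<open>p l = k\<close> by auto
  then have "(w k)\<^sup>2 \<le> (\<Sum>j<N. d j * (w j)\<^sup>2)"
    using member_le_sum[of k "{..<N}" "\<lambda>j. d j * (w j)\<^sup>2"] nonneg_d leader by simp
  then have B_le: "B \<le> laplacian_energy N a w + (\<Sum>j<N. d j * (w j)\<^sup>2)"
    unfolding B_def using path_energy_le_laplacian_energy[OF sym nonneg_a path, of w] by linarith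
  have on_path: "(w (p s))\<^sup>2 \<le> real (l - s + 1) * B" if "s \<le> l" for s
    using square_le_path_energy[OF that, of "\<lambda>t. w (p t)"] \<open>p l = k\<close> by (simp add: B_def)
  have "(\<Sum>j\<in>P. (w j)\<^sup>2) = (\<Sum>s\<le>l. (w (p s))\<^sup>2)"
    unfolding P_def by (simp add: sum.reindex[OF inj])
  also have "\<dots> \<le> (\<Sum>s\<le>l. real (l - s + 1) * B)"
    using on_path by (intro sum_mono) auto
  also have "\<dots> = real (l + 1) * real (l + 2) / 2 * B"
    by (simp only: sum_distrib_right[symmetric] gauss_sum_reversed)
  finally have on_P: "(\<Sum>j\<in>P. (w j)\<^sup>2) \<le> real (l + 1) * real (l + 2) / 2 * B" .
  have "card ({..<N} - P) = N - (l + 1)"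
    using pN card_image[OF inj] by (subst card_Diff_subset) (auto simp: P_def)
  moreover have "(w j)\<^sup>2 \<le> real (l + 1) * B" if "j < N" for j
    using max that on_path[of 0] \<open>p 0 = i0\<close> by fastforce
  ultimately have off_P: "(\<Sum>j\<in>{..<N} - P. (w j)\<^sup>2) \<le> real (N - (l + 1)) * (real (l + 1) * B)"
    using sum_bounded_above[of "{..<N} - P" "\<lambda>j. (w j)\<^sup>2" "real (l + 1) * B"] by simp
  have "(\<Sum>j<N. (w j)\<^sup>2) = (\<Sum>j\<in>P. (w j)\<^sup>2) + (\<Sum>j\<in>{..<N} - P. (w j)\<^sup>2)"
    using pN by (subst sum.subset_diff[of P]) (auto simp: P_def)
  also have "\<dots> \<le> (real (l + 1) * real (l + 2) / 2 + real (N - (l + 1)) * real (l + 1)) * B"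
    using add_mono[OF on_P off_P] by (simp only: ring_distribs mult_ac)
  also have "\<dots> \<le> real N * (real N + 1) / 2 * B"
    using triangular_add_rectangle_le[OF \<open>l < N\<close>] \<open>B \<ge> 0\<close> by (rule mult_right_mono)
  also have "\<dots> \<le> real N * (real N + 1) / 2 * (laplacian_energy N a w + (\<Sum>j<N. d j * (w j)\<^sup>2))"
    using B_le by (intro mult_left_mono) auto
  finally show ?thesis .
qed

lemma sum_squares_le_energy_if_sign_change:
  fixes w :: "nat \<Rightarrow> real"
  assumes sym: "\<forall>i<N. \<forall>j<N. a i j = a j i" and nonneg_a: "\<forall>i j. a i j \<ge> 0"
    and reach: "(graph_edge N a)\<^sup>*\<^sup>* i0 k" and "i0 < N" and sign: "w i0 * w k \<le> 0"
    and max: "\<forall>j<N. (w j)\<^sup>2 \<le> (w i0)\<^sup>2"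
  shows "(\<Sum>j<N. (w j)\<^sup>2) \<le> real N * (real N - 1) * laplacian_energy N a w"
proof -
  obtain p l where path: "simple_path N a p l" and "p 0 = i0" "p l = k"
    using rtranclp_imp_simple_path[OF reach \<open>i0 < N\<close>] by blast
  define T where "T = (\<Sum>t<l. (w (p t) - w (p (Suc t)))\<^sup>2)"
  have "l < N"
    using path by (rule simple_path_length_less)
  have "T \<ge> 0"
    unfolding T_def by (auto intro!: sum_nonneg)
  have T_le: "T \<le> laplacian_energy N a w"
    unfolding T_def using path by (rule path_energy_le_laplacian_energy[OF sym nonneg_a])
  have "(w i0)\<^sup>2 \<le> (w i0 - w k)\<^sup>2"
    using sign zero_le_power2[of "w k"] unfolding power2_diff by linarith
  also have "\<dots> \<le> real l * T"
    using square_diff_le_path_energy[of 0 l "\<lambda>t. w (p t)"] \<open>p 0 = i0\<close> \<open>p l = k\<close>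
    by (simp add: T_def)
  also have "\<dots> \<le> (real N - 1) * laplacian_energy N a w"
    using \<open>l < N\<close> \<open>T \<ge> 0\<close> T_le by (intro mult_mono) auto
  finally have max_le: "(w i0)\<^sup>2 \<le> (real N - 1) * laplacian_energy N a w" .
  have "(\<Sum>j<N. (w j)\<^sup>2) \<le> real N * (w i0)\<^sup>2"
    using sum_bounded_above[of "{..<N}" "\<lambda>j. (w j)\<^sup>2"] max by simp
  also have "\<dots> \<le> real N * (real N - 1) * laplacian_energy N a w"
    using max_le by (simp add: mult.assoc mult_left_mono)
  finally show ?thesis .
qed

lemma inverse_lambda_H_ge:
  fixes n :: nat
  shows "real n * (real n + 1) / 2 \<le> real n * (real n ^ 2 - real n + 4) / 4"
    and "real n * (real n - 1) \<le> real n * (real n ^ 2 - real n + 4) / 4"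
proof -
  have "(real n - 1) * (real n - 2) \<ge> 0"
  proof (cases "n \<le> 1")
    case True
    then have "n = 0 \<or> n = 1"
      by auto
    then show ?thesis
      by auto
  next
    case False
    then show ?thesis
      by simp
  qed
  moreover have "real n * (real n ^ 2 - real n + 4) / 4 - real n * (real n + 1) / 2
      = real n * ((real n - 1) * (real n - 2)) / 4"
    by (simp add: power2_eq_square field_simps)
  ultimately show "real n * (real n + 1) / 2 \<le> real n * (real n ^ 2 - real n + 4) / 4"
    by (smt (verit) divide_nonneg_nonneg mult_nonneg_nonneg of_nat_0_le_iff)
  have "real n * (real n ^ 2 - real n + 4) / 4 - real n * (real n - 1)
      = real n * ((real n - 5 / 2)\<^sup>2 + 7 / 4) / 4"
    by (simp add: power2_eq_square field_simps)
  then show "real n * (real n - 1) \<le> real n * (real n ^ 2 - real n + 4) / 4"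
    by (smt (verit) divide_nonneg_nonneg mult_nonneg_nonneg of_nat_0_le_iff zero_le_power2)
qed

lemma sum_squares_le_energy:
  fixes a :: "nat \<Rightarrow> nat \<Rightarrow> real" and d w :: "nat \<Rightarrow> real"
  assumes a01: "\<forall>i j. a i j = 0 \<or> a i j = 1" and sym: "\<forall>i<N. \<forall>j<N. a i j = a j i"
    and d01: "\<forall>i. d i = 0 \<or> d i = 1"
    and eig: "leader_follower_eigen N a d \<mu> w" and "\<mu> \<noteq> 0"
    and "i0 < N" and "w i0 \<noteq> 0" and max: "\<forall>j<N. (w j)\<^sup>2 \<le> (w i0)\<^sup>2"
    and reach: "\<forall>j<N. w j \<noteq> 0 \<longrightarrow> (graph_edge N a)\<^sup>*\<^sup>* i0 j"
  shows "(\<Sum>j<N. (w j)\<^sup>2)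
      \<le> real N * (real N ^ 2 - real N + 4) / 4 * (laplacian_energy N a w + (\<Sum>j<N. d j * (w j)\<^sup>2))"
    (is "_ \<le> ?c * (?Qe + ?Qd)")
proof -
  have nonneg_a: "\<forall>i j. a i j \<ge> 0"
    using a01 by (metis order.refl zero_le_one)
  have nonneg_d: "\<forall>i. d i \<ge> 0"
    using d01 by (metis order.refl zero_le_one)
  have "?Qe \<ge> 0" and "?Qd \<ge> 0"
    using nonneg_a nonneg_d by (auto simp: laplacian_energy_def intro!: sum_nonneg)
  have "?c \<ge> 0"
    by (rule order_trans[OF _ inverse_lambda_H_ge(1)]) simp
  show ?thesis
  proof (cases "\<exists>k<N. w k \<noteq> 0 \<and> d k = 1")
    case True
    then obtain k where "k < N" "w k \<noteq> 0" "d k = 1"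
      by blast
    then have "(graph_edge N a)\<^sup>*\<^sup>* i0 k"
      using reach by blast
    then have "(\<Sum>j<N. (w j)\<^sup>2) \<le> real N * (real N + 1) / 2 * (?Qe + ?Qd)"
      using sum_squares_le_energy_if_leader_reachable[OF sym nonneg_a nonneg_d] \<open>i0 < N\<close>
        \<open>d k = 1\<close> max by blast
    also have "\<dots> \<le> ?c * (?Qe + ?Qd)"
      using inverse_lambda_H_ge(1) \<open>?Qe \<ge> 0\<close> \<open>?Qd \<ge> 0\<close> by (intro mult_right_mono) auto
    finally show ?thesis .
  next
    case False
    then have "\<forall>i<N. d i * w i = 0"
      using d01 by auto
    then have "(\<Sum>i<N. w i) = 0"
      using leader_follower_eigen_sum_eq_0[OF sym eig] \<open>\<mu> \<noteq> 0\<close> by blast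
    then obtain k where "k < N" "w i0 * w k < 0"
      using sum_zero_imp_opposite_sign[of "{..<N}" w i0] \<open>i0 < N\<close> \<open>w i0 \<noteq> 0\<close> by auto
    moreover have "w k \<noteq> 0"
      using \<open>w i0 * w k < 0\<close> by auto
    ultimately have "(graph_edge N a)\<^sup>*\<^sup>* i0 k"
      using reach by blast
    then have "(\<Sum>j<N. (w j)\<^sup>2) \<le> real N * (real N - 1) * ?Qe"
      using sum_squares_le_energy_if_sign_change[OF sym nonneg_a] \<open>i0 < N\<close>
        \<open>w i0 * w k < 0\<close> max by (simp add: less_imp_le)
    also have "\<dots> \<le> ?c * ?Qe"
      using inverse_lambda_H_ge(2) \<open>?Qe \<ge> 0\<close> by (rule mult_right_mono)
    also have "\<dots> \<le> ?c * (?Qe + ?Qd)"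
      using \<open>?c \<ge> 0\<close> \<open>?Qd \<ge> 0\<close> by (intro mult_left_mono) auto
    finally show ?thesis .
  qed
qed

lemma leader_follower_eigenvalue_ge:
  fixes a :: "nat \<Rightarrow> nat \<Rightarrow> real" and d v :: "nat \<Rightarrow> real"
  assumes a01: "\<forall>i j. a i j = 0 \<or> a i j = 1" and sym: "\<forall>i<N. \<forall>j<N. a i j = a j i"
    and d01: "\<forall>i. d i = 0 \<or> d i = 1"
    and eig: "leader_follower_eigen N a d \<mu> v" and nonzero: "\<exists>i<N. v i \<noteq> 0" and "\<mu> \<noteq> 0"
  shows "4 / (real N * (real N ^ 2 - real N + 4)) \<le> \<mu>"
proof -
  obtain w i0 where weig: "leader_follower_eigen N a d \<mu> w" and "i0 < N" "w i0 \<noteq> 0"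
    and max: "\<forall>j<N. (w j)\<^sup>2 \<le> (w i0)\<^sup>2"
    and reach: "\<forall>j<N. w j \<noteq> 0 \<longrightarrow> (graph_edge N a)\<^sup>*\<^sup>* i0 j"
    using leader_follower_eigen_component[OF a01 sym eig nonzero] by blast
  define c where "c = real N * (real N ^ 2 - real N + 4) / 4"
  define S where "S = (\<Sum>j<N. (w j)\<^sup>2)"
  have "S > 0"
    unfolding S_def using \<open>i0 < N\<close> \<open>w i0 \<noteq> 0\<close> by (intro sum_pos2[of _ i0]) auto
  have "0 < real N * (real N + 1) / 2"
    using \<open>i0 < N\<close> by simp
  also have "\<dots> \<le> c"
    unfolding c_def by (rule inverse_lambda_H_ge(1))
  finally have "c > 0" .
  have "S \<le> c * (laplacian_energy N a w + (\<Sum>j<N. d j * (w j)\<^sup>2))"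
    unfolding S_def c_def
    by (rule sum_squares_le_energy[OF a01 sym d01 weig \<open>\<mu> \<noteq> 0\<close> \<open>i0 < N\<close> \<open>w i0 \<noteq> 0\<close> max reach])
  also have "\<dots> = S * (c * \<mu>)"
    unfolding S_def leader_follower_eigen_energy[OF sym weig, symmetric] by (simp add: mult_ac)
  finally have "1 \<le> c * \<mu>"
    using \<open>S > 0\<close> by simp
  then show ?thesis
    using \<open>c > 0\<close> by (simp add: c_def pos_divide_le_eq mult_ac)
qed

lemma leader_follower_eigen_of_H_mat:
  fixes F :: "(nat \<times> nat) set" and v :: "real vec"
  assumes loopfree: "\<forall>i<N. (Suc i, Suc i) \<notin> F" and "v \<in> carrier_vec N"
    and eigvec: "H_mat N F *\<^sub>v v = \<mu> \<cdot>\<^sub>v v"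
  shows "leader_follower_eigen N (\<lambda>i j. adj F (Suc i) (Suc j)) (\<lambda>i. adj F (Suc i) 0) \<mu> (\<lambda>i. v $ i)"
  unfolding leader_follower_eigen_def
proof (intro allI impI)
  fix i assume "i < N"
  define a where "a j = adj F (Suc i) (Suc j)" for j
  define deg where "deg = (\<Sum>j<N. a j) + adj F (Suc i) 0"
  have "a i = 0"
    using loopfree \<open>i < N\<close> by (simp add: a_def adj_def)
  have "\<mu> * v $ i = (H_mat N F *\<^sub>v v) $ i"
    using eigvec \<open>v \<in> carrier_vec N\<close> \<open>i < N\<close> by simp
  also have "\<dots> = (\<Sum>j<N. (if j = i then deg else - a j) * v $ j)"
    using \<open>i < N\<close> \<open>v \<in> carrier_vec N\<close>
    by (auto simp: H_mat_def laplacian_mat_def leader_diag_def scalar_prod_def deg_def a_def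
        sum.atLeast1_atMost_eq lessThan_atLeast0 intro!: sum.cong)
  also have "\<dots> = (\<Sum>j<N. (if j = i then deg * v $ j else 0) - a j * v $ j)"
    using \<open>a i = 0\<close> by (intro sum.cong) auto
  also have "\<dots> = deg * v $ i - (\<Sum>j<N. a j * v $ j)"
    using \<open>i < N\<close> by (simp add: sum_subtractf)
  also have "\<dots> = (\<Sum>j<N. a j * (v $ i - v $ j)) + adj F (Suc i) 0 * v $ i"
    by (simp add: deg_def right_diff_distrib sum_subtractf sum_distrib_left algebra_simps)
  finally show "\<mu> * v $ i = (\<Sum>j<N. adj F (Suc i) (Suc j) * (v $ i - v $ j))
      + adj F (Suc i) 0 * v $ i"
    by (simp add: a_def)
qed

theorem lemma4:
  fixes N n0 :: nat and \<sigma> :: "real \<Rightarrow> nat" and E :: "nat \<Rightarrow> (nat \<times> nat) set"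
  assumes sigma_range: "\<forall>t\<ge>0. \<sigma> t \<in> {1..n0}"
    and sigma_pc: "piecewise_constant \<sigma>"
    and graphs: "\<forall>p\<in>{1..n0}. E p \<subseteq> {(j, i). j \<le> N \<and> i \<le> N \<and> j \<noteq> i}"
    and undirected: "\<forall>t\<ge>0. \<forall>i\<in>{1..N}. \<forall>j\<in>{1..N}. (j, i) \<in> E (\<sigma> t) \<longleftrightarrow> (i, j) \<in> E (\<sigma> t)"
  shows "\<forall>t\<ge>0. \<forall>\<mu>. eigenvalue (H_mat N (E (\<sigma> t))) \<mu> \<and> \<mu> \<noteq> 0 \<longrightarrow>
           \<mu> \<ge> 4 / (real N * (real N ^ 2 - real N + 4))"
proof (intro allI impI)
  fix t \<mu> :: real
  assume "t \<ge> 0" and ev: "eigenvalue (H_mat N (E (\<sigma> t))) \<mu> \<and> \<mu> \<noteq> 0"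
  \<comment> \<open>the bound holds graph by graph\<close>
  define F where "F = E (\<sigma> t)"
  have loopfree: "\<forall>i<N. (Suc i, Suc i) \<notin> F"
    using graphs sigma_range \<open>t \<ge> 0\<close> by (auto simp: F_def)
  have sym: "\<forall>i<N. \<forall>j<N. adj F (Suc i) (Suc j) = adj F (Suc j) (Suc i)"
    using undirected \<open>t \<ge> 0\<close> by (auto simp: F_def adj_def)
  have "dim_row (H_mat N F) = N"
    by (simp add: H_mat_def laplacian_mat_def leader_diag_def)
  then obtain v where "v \<in> carrier_vec N" "v \<noteq> 0\<^sub>v N" "H_mat N F *\<^sub>v v = \<mu> \<cdot>\<^sub>v v"
    using ev unfolding eigenvalue_def eigenvector_def F_def by metis
  moreover from this have "\<exists>i<N. v $ i \<noteq> 0"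
    by (metis eq_vecI index_zero_vec carrier_vecD dim_vec)
  ultimately show "\<mu> \<ge> 4 / (real N * (real N ^ 2 - real N + 4))"
    using leader_follower_eigenvalue_ge[OF _ sym _ leader_follower_eigen_of_H_mat[OF loopfree]] ev
    by (auto simp: adj_def)
qed

end
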